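(* Let $\mathbb F$ be an algebraically closed field, $m\ge1$, and $L:\mathbb F\to\mathbb F^{m+1}$, $x\mapsto(x,x^3,x^9,\dots,x^{3^m})$, so $L_i(z)=z^{3^i}$ for $0\le i\le m$. Then for any $e_1,\dots,e_{m-1}\in\mathbb Q_{\ge0}$ there is some $i\in\{0,\dots,m\}$ with $z^{3^i}\notin 2\text{-}\mathrm{span}(z^{e_1},\dots,z^{e_{m-1}})$.
   Context: $z$ is an indeterminate, and for $e\in\mathbb Q_{\ge0}$, $z^e$ denotes an element of $\overline{\mathbb F(z)}$ from a fixed compatible system of fractional powers (so $z^1=z$, $z^0=1$, $z^ez^{e'}=z^{e+e'}$). For $p_1,\dots,p_r\in\overline{\mathbb F(z)}$, $2\text{-}\mathrm{span}(p_1,\dots,p_r)$ is the $\mathbb F$-linear span of all products $p_1^{a_1}\cdots p_r^{a_r}$ with $a_i\in\mathbb N$, $\sum_ia_i\le 2$. *)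

theory Defs
  imports "HOL-Computational_Algebra.Polynomial"
begin

definition is_subfield :: "'k::field set \<Rightarrow> bool" where
  "is_subfield F \<longleftrightarrow> 0 \<in> F \<and> 1 \<in> F \<and>
     (\<forall>x\<in>F. \<forall>y\<in>F. x + y \<in> F \<and> x * y \<in> F) \<and>
     (\<forall>x\<in>F. - x \<in> F \<and> inverse x \<in> F)"

definition alg_closed_subfield :: "'k::field set \<Rightarrow> bool" where
  "alg_closed_subfield F \<longleftrightarrow>
     (\<forall>p::'k poly. set (coeffs p) \<subseteq> F \<and> degree p > 0 \<longrightarrow> (\<exists>x\<in>F. poly p x = 0))"

definition transcendental_over :: "'k::field set \<Rightarrow> 'k \<Rightarrow> bool" where
  "transcendental_over F z \<longleftrightarrow>
     (\<forall>p::'k poly. set (coeffs p) \<subseteq> F \<and> poly p z = 0 \<longrightarrow> p = 0)"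

text \<open>A compatible system of fractional powers z^e, e a non-negative rational.\<close>
definition frac_power_system :: "'k::field \<Rightarrow> (rat \<Rightarrow> 'k) \<Rightarrow> bool" where
  "frac_power_system z pw \<longleftrightarrow> pw 0 = 1 \<and> pw 1 = z \<and>
     (\<forall>e e'. e \<ge> 0 \<longrightarrow> e' \<ge> 0 \<longrightarrow> pw (e + e') = pw e * pw e')"

definition F_span :: "'k::field set \<Rightarrow> 'k set \<Rightarrow> 'k set" where
  "F_span F S = {\<Sum>v\<in>A. c v * v | A c. finite A \<and> A \<subseteq> S \<and> (\<forall>v\<in>A. c v \<in> F)}"

definition two_span :: "'k::field set \<Rightarrow> (nat \<Rightarrow> 'k) \<Rightarrow> nat set \<Rightarrow> 'k set" where
  "two_span F p I = F_span F {\<Prod>i\<in>I. p i ^ a i | a::nat \<Rightarrow> nat. (\<Sum>i\<in>I. a i) \<le> 2}"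

end

theory Submission imports Defs begin

text \<open>Clearing denominators, all exponents become multiples of 1/N, so with w = z^(1/N) every
  generator of the 2-span is a power w^K and z^(3^i) = w^(N 3^i). Since F is algebraically
  closed and w \<notin> F, w is transcendental over F, so distinct powers of w are F-linearly
  independent. Hence each 3^i is a combination \<Sum> a_j e_j with \<Sum> a_j \<le> 2, which forces
  e_j \<le> 3^i \<le> 2 e_j for some j. An interval [x, 2x] contains at most one power of 3, so the
  m + 1 powers 3^0, ..., 3^m would need m + 1 distinct indices j among only m - 1.\<close>

lemma subfield_sum:
  assumes "is_subfield F" "\<And>x. x \<in> A \<Longrightarrow> f x \<in> F"
  shows "sum f A \<in> F"
  using assms(2)
  by (induction A rule: infinite_finite_induct) (use assms(1) in \<open>auto simp: is_subfield_def\<close>)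

lemma subfield_diff:
  assumes "is_subfield F" "x \<in> F" "y \<in> F"
  shows "x - y \<in> F"
  using assms unfolding is_subfield_def by (metis diff_conv_add_uminus)

lemma subfield_power:
  assumes "is_subfield F" "x \<in> F"
  shows "x ^ n \<in> F"
  by (induction n) (use assms in \<open>auto simp: is_subfield_def\<close>)

lemma coeffs_subset_subfield_iff:
  assumes "is_subfield F"
  shows "set (coeffs p) \<subseteq> F \<longleftrightarrow> (\<forall>n. coeff p n \<in> F)"
  using assms forall_coeffs_conv[of "\<lambda>x. x \<in> F" p] by (auto simp: is_subfield_def)

lemma poly_in_subfield:
  assumes "is_subfield F" "\<forall>n. coeff p n \<in> F" "c \<in> F"
  shows "poly p c \<in> F"
  using assms(2)
proof (induction p)
  case (pCons a p)
  then have "a \<in> F" "\<forall>n. coeff p n \<in> F"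
    by (metis coeff_pCons_0, metis coeff_pCons_Suc)
  with pCons.IH assms(1,3) show ?case by (simp add: is_subfield_def)
qed (use assms(1) in \<open>simp add: is_subfield_def\<close>)

lemma coeff_synthetic_div_in_subfield:
  assumes "is_subfield F" "\<forall>n. coeff p n \<in> F" "c \<in> F"
  shows "\<forall>n. coeff (synthetic_div p c) n \<in> F"
  using assms(2)
proof (induction p)
  case (pCons a p)
  then have "\<forall>n. coeff p n \<in> F" by (metis coeff_pCons_Suc)
  with pCons.IH poly_in_subfield[OF assms(1) _ assms(3)] show ?case
    by (simp add: coeff_pCons split: nat.split)
qed (use assms(1) in \<open>simp add: is_subfield_def\<close>)

lemma transcendental_over_if_not_in_alg_closed_subfield:
  assumes "is_subfield F" "alg_closed_subfield F" "w \<notin> F"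
  shows "transcendental_over F w"
proof -
  note coeffs_in_F = coeffs_subset_subfield_iff[OF assms(1)]
  have "p = 0" if "\<forall>n. coeff p n \<in> F" "poly p w = 0" for p
    using that
  proof (induction "degree p" arbitrary: p rule: less_induct)
    case (less p)
    show ?case
    proof (cases "degree p = 0")
      case True
      with less.prems show ?thesis using poly_zero by blast
    next
      case False
      then obtain r where r: "r \<in> F" "poly p r = 0"
        using assms(2) less.prems coeffs_in_F unfolding alg_closed_subfield_def by blast
      let ?q = "synthetic_div p r"
      have p_eq: "p = [:-r, 1:] * ?q" using synthetic_div_correct'[of r p] r by simp
      have "(w - r) * poly ?q w = 0"
        using less.prems(2) by (subst (asm) p_eq) auto
      moreover have "w \<noteq> r" using r assms(3) by auto
      ultimately have "poly ?q w = 0" by simp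
      moreover have "degree ?q < degree p" using False by (simp add: degree_synthetic_div)
      ultimately have "?q = 0"
        using less.hyps coeff_synthetic_div_in_subfield[OF assms(1) less.prems(1) r(1)] by blast
      then show ?thesis using p_eq by simp
    qed
  qed
  then show ?thesis unfolding transcendental_over_def using coeffs_in_F by blast
qed

lemma not_in_subfield_if_transcendental_over:
  assumes "is_subfield F" "transcendental_over F z"
  shows "z \<notin> F"
proof
  assume "z \<in> F"
  then have "set (coeffs [:-z, 1:]) \<subseteq> F" using assms(1) by (auto simp: is_subfield_def)
  moreover have "poly [:-z, 1:] z = 0" by simp
  ultimately have "[:-z, 1:] = 0" using assms(2) unfolding transcendental_over_def by blast
  then show False by simp
qed

lemma F_span_mono: "S \<subseteq> T \<Longrightarrow> F_span F S \<subseteq> F_span F T"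
  unfolding F_span_def by blast

lemma power_not_in_F_span_other_powers:
  assumes "is_subfield F" "transcendental_over F w" "n \<notin> K"
  shows "w ^ n \<notin> F_span F ((^) w ` K)"
proof
  assume "w ^ n \<in> F_span F ((^) w ` K)"
  then obtain A c where A: "w ^ n = (\<Sum>v\<in>A. c v * v)" "A \<subseteq> (^) w ` K" "\<forall>v\<in>A. c v \<in> F"
    unfolding F_span_def by blast
  then have "\<forall>v\<in>A. \<exists>k\<in>K. v = w ^ k" by blast
  then obtain k where k: "\<forall>v\<in>A. k v \<in> K \<and> v = w ^ k v" by metis
  define p where "p = monom 1 n - (\<Sum>v\<in>A. monom (c v) (k v))"
  have "(\<Sum>v\<in>A. c v * w ^ k v) = (\<Sum>v\<in>A. c v * v)"
    using k by (intro sum.cong) auto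
  then have root: "poly p w = 0"
    using A(1) by (simp add: p_def poly_sum poly_monom)
  have coeff_p: "coeff p d = (if n = d then 1 else 0) - (\<Sum>v\<in>A. if k v = d then c v else 0)" for d
    by (simp add: p_def coeff_sum)
  have F0: "0 \<in> F" and F1: "1 \<in> F" using assms(1) by (simp_all add: is_subfield_def)
  have "coeff p d \<in> F" for d
    unfolding coeff_p using A(3) F0 F1 by (intro subfield_diff subfield_sum assms(1)) auto
  then have "set (coeffs p) \<subseteq> F" using coeffs_subset_subfield_iff[OF assms(1)] by blast
  moreover have "(\<Sum>v\<in>A. if k v = n then c v else 0) = 0"
    using k assms(3) by (intro sum.neutral) auto
  then have "coeff p n = 1" by (simp add: coeff_p)
  then have "p \<noteq> 0" by auto
  ultimately show False
    using root assms(2) unfolding transcendental_over_def by blast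
qed

lemma frac_power_of_nat_mult:
  assumes "frac_power_system z pw" "e \<ge> 0"
  shows "pw (of_nat a * e) = pw e ^ a"
proof (induction a)
  case (Suc a)
  have "pw (of_nat (Suc a) * e) = pw (of_nat a * e + e)" by (simp add: algebra_simps)
  also have "\<dots> = pw (of_nat a * e) * pw e" using assms by (simp add: frac_power_system_def)
  finally show ?case using Suc by simp
qed (use assms(1) in \<open>simp add: frac_power_system_def\<close>)

lemma frac_power_prod:
  assumes "frac_power_system z pw" "finite I" "\<forall>j\<in>I. e j \<ge> 0"
  shows "(\<Prod>j\<in>I. pw (e j) ^ a j) = pw (\<Sum>j\<in>I. of_nat (a j) * e j)"
  using assms(2,3)
proof (induction I rule: finite_induct)
  case (insert x I)
  have "(\<Sum>j\<in>I. of_nat (a j) * e j) \<ge> 0" "e x \<ge> 0"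
    using insert.prems by (auto intro: sum_nonneg)
  with insert assms(1) show ?case
    by (simp add: frac_power_of_nat_mult[symmetric] frac_power_system_def)
qed (use assms(1) in \<open>simp add: frac_power_system_def\<close>)

lemma common_denominator:
  assumes "finite I" "\<forall>j\<in>I. (e j :: rat) \<ge> 0"
  shows "\<exists>N::nat. N > 0 \<and> (\<forall>j\<in>I. \<exists>k::nat. e j * of_nat N = of_nat k)"
  using assms
proof (induction I rule: finite_induct)
  case (insert x I)
  then obtain N where N: "N > 0" "\<forall>j\<in>I. \<exists>k::nat. e j * of_nat N = of_nat k" by auto
  obtain p q where pq: "quotient_of (e x) = (p, q)" by (cases "quotient_of (e x)")
  have q: "q > 0" and ex: "e x = of_int p / of_int q"
    using quotient_of_denom_pos[OF pq] quotient_of_div[OF pq] .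
  then have p: "p \<ge> 0" using insert.prems by (simp add: zero_le_divide_iff)
  have "e x * of_nat (N * nat q) = of_nat (nat p * N)" using ex p q by simp
  moreover have "\<exists>k::nat. e j * of_nat (N * nat q) = of_nat k" if j: "j \<in> I" for j
  proof -
    obtain k where "e j * of_nat N = of_nat k" using N(2) j by blast
    then have "e j * of_nat (N * nat q) = of_nat (k * nat q)" using q by simp
    then show ?thesis by blast
  qed
  ultimately have "\<forall>j\<in>insert x I. \<exists>k::nat. e j * of_nat (N * nat q) = of_nat k" by blast
  moreover have "N * nat q > 0" using N(1) q by simp
  ultimately show ?case by blast
qed (auto intro: exI[of _ 1])

lemma power_in_two_span_imp_exponent_sum:
  assumes "is_subfield F" "alg_closed_subfield F" "transcendental_over F z"
    "frac_power_system z pw" "finite I" "\<forall>j\<in>I. e j \<ge> 0"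
    "z ^ n \<in> two_span F (\<lambda>j. pw (e j)) I"
  shows "\<exists>a. sum a I \<le> 2 \<and> (\<Sum>j\<in>I. of_nat (a j) * e j) = of_nat n"
proof -
  obtain N :: nat and k where N: "N > 0" and k: "\<forall>j\<in>I. e j * of_nat N = of_nat (k j)"
    using common_denominator[OF assms(5,6)] by metis
  define w where "w = pw (1 / of_nat N)"
  have pw_frac: "pw (of_nat K / of_nat N) = w ^ K" for K
    using frac_power_of_nat_mult[OF assms(4), of "1 / of_nat N" K] by (simp add: w_def)
  have z_eq: "z = w ^ N"
    using pw_frac[of N] N assms(4) by (simp add: frac_power_system_def)
  have "w \<notin> F"
    using not_in_subfield_if_transcendental_over[OF assms(1,3)] subfield_power[OF assms(1)] z_eq
    by blast
  then have w_transc: "transcendental_over F w"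
    using transcendental_over_if_not_in_alg_closed_subfield[OF assms(1,2)] by blast
  define Ks where "Ks = {K. \<exists>a. sum a I \<le> 2 \<and> (\<Sum>j\<in>I. of_nat (a j) * e j) = of_nat K / of_nat N}"
  have "{\<Prod>j\<in>I. pw (e j) ^ a j | a. sum a I \<le> 2} \<subseteq> (^) w ` Ks"
  proof clarify
    fix a :: "nat \<Rightarrow> nat" assume a: "sum a I \<le> 2"
    define K where "K = (\<Sum>j\<in>I. a j * k j)"
    have "(\<Sum>j\<in>I. of_nat (a j) * e j) * of_nat N = of_nat K"
      using k by (simp add: K_def sum_distrib_right mult.assoc)
    then have exponent: "(\<Sum>j\<in>I. of_nat (a j) * e j) = of_nat K / of_nat N"
      using N by (simp add: eq_divide_eq)
    then have "(\<Prod>j\<in>I. pw (e j) ^ a j) = w ^ K"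
      using frac_power_prod[OF assms(4-6)] pw_frac by simp
    moreover have "K \<in> Ks" using a exponent by (auto simp: Ks_def)
    ultimately show "(\<Prod>j\<in>I. pw (e j) ^ a j) \<in> (^) w ` Ks" by blast
  qed
  then have "w ^ (N * n) \<in> F_span F ((^) w ` Ks)"
    using assms(7) F_span_mono unfolding two_span_def z_eq power_mult by blast
  then have "N * n \<in> Ks"
    using power_not_in_F_span_other_powers[OF assms(1) w_transc] by blast
  then show ?thesis using N by (simp add: Ks_def)
qed

lemma exists_term_bracketing_sum:
  fixes e :: "'b \<Rightarrow> 'a::linordered_idom"
  assumes "finite I" "\<forall>j\<in>I. e j \<ge> 0" "sum a I \<le> (2::nat)"
    "(\<Sum>j\<in>I. of_nat (a j) * e j) = t" "t > 0"
  shows "\<exists>j\<in>I. e j \<le> t \<and> t \<le> 2 * e j"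
proof -
  let ?J = "{j\<in>I. a j > 0}"
  have "?J \<noteq> {}"
  proof
    assume "?J = {}"
    then have "\<forall>j\<in>I. a j = 0" by auto
    then have "(\<Sum>j\<in>I. of_nat (a j) * e j) = 0" by simp
    with assms(4,5) show False by simp
  qed
  moreover have "finite ?J" using assms(1) by simp
  ultimately have "Max (e ` ?J) \<in> e ` ?J" by simp
  then obtain j0 where "j0 \<in> ?J" "e j0 = Max (e ` ?J)" by auto
  with \<open>finite ?J\<close> have j0: "j0 \<in> I" "a j0 > 0" "\<forall>j\<in>?J. e j \<le> e j0" by simp_all
  have e0: "e j0 \<ge> 0" using assms(2) j0(1) by blast
  have "t \<le> (\<Sum>j\<in>I. of_nat (a j) * e j0)"
    unfolding assms(4)[symmetric]
  proof (rule sum_mono)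
    fix j assume "j \<in> I"
    with j0(3) show "of_nat (a j) * e j \<le> of_nat (a j) * e j0"
      by (cases "a j = 0") (auto intro: mult_left_mono)
  qed
  also have "\<dots> = of_nat (sum a I) * e j0" by (simp add: sum_distrib_right)
  also have "\<dots> \<le> 2 * e j0"
    using mult_right_mono[OF of_nat_mono[OF assms(3)] e0] by simp
  finally have upper: "t \<le> 2 * e j0" .
  have "e j0 \<le> of_nat (a j0) * e j0"
    using j0(2) e0 mult_right_mono[of 1 "of_nat (a j0)" "e j0"] by simp
  also have "\<dots> \<le> t"
    unfolding assms(4)[symmetric] using j0(1) assms(1,2) by (intro member_le_sum) auto
  finally show ?thesis using upper j0(1) by blast
qed

lemma power_of_three_bracket_unique:
  fixes x :: "'a::linordered_field"
  assumes "x \<le> 3 ^ i" "3 ^ i \<le> 2 * x" "x \<le> 3 ^ i'" "3 ^ i' \<le> 2 * x"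
  shows "i = i'"
proof -
  have less_impossible: False if "x \<le> 3 ^ i" "3 ^ i' \<le> 2 * x" "i < i'" for i i'
  proof -
    have "(3::'a) * 3 ^ i \<le> 3 ^ i'"
      using power_increasing[of "Suc i" i' "3::'a"] that(3) by simp
    moreover have "(0::'a) < 3 ^ i" by simp
    ultimately show False using that(1,2) by linarith
  qed
  show ?thesis using less_impossible[of i i'] less_impossible[of i' i] assms
    by (metis linorder_neqE_nat)
qed

lemma card_ge_if_powers_of_three_bracketed:
  fixes e :: "'b \<Rightarrow> 'a::linordered_field"
  assumes "finite J" "\<forall>i\<in>{0..m}. \<exists>j\<in>J. e j \<le> 3 ^ i \<and> 3 ^ i \<le> 2 * e j"
  shows "m + 1 \<le> card J"
proof -
  have "\<forall>i\<in>{0..m}. \<exists>j. j \<in> J \<and> e j \<le> 3 ^ i \<and> 3 ^ i \<le> 2 * e j"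
    using assms(2) by blast
  from bchoice[OF this]
  obtain g where g: "\<forall>i\<in>{0..m}. g i \<in> J \<and> e (g i) \<le> 3 ^ i \<and> 3 ^ i \<le> 2 * e (g i)"
    by blast
  have "inj_on g {0..m}"
  proof (rule inj_onI)
    fix i i' assume "i \<in> {0..m}" "i' \<in> {0..m}" "g i = g i'"
    with g have "e (g i) \<le> 3 ^ i" "3 ^ i \<le> 2 * e (g i)" "e (g i) \<le> 3 ^ i'" "3 ^ i' \<le> 2 * e (g i)"
      by metis+
    then show "i = i'" by (rule power_of_three_bracket_unique)
  qed
  moreover have "g ` {0..m} \<subseteq> J" using g by blast
  ultimately have "card {0..m} \<le> card J" using card_inj_on_le assms(1) by blast
  then show ?thesis by simp
qed

theorem proposition9p7:
  fixes F :: "'k::field set" and z :: 'k and pw :: "rat \<Rightarrow> 'k"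
    and m :: nat and e :: "nat \<Rightarrow> rat"
  assumes "is_subfield F" and "alg_closed_subfield F"
    and "transcendental_over F z"
    and "frac_power_system z pw"
    and "m \<ge> 1"
    and "\<forall>j\<in>{1..m-1}. e j \<ge> 0"
  shows "\<exists>i\<in>{0..m}. z ^ (3 ^ i) \<notin> two_span F (\<lambda>j. pw (e j)) {1..m-1}"
proof (rule ccontr)
  let ?I = "{1..m-1}"
  assume "\<not> ?thesis"
  then have all_in_span: "z ^ 3 ^ i \<in> two_span F (\<lambda>j. pw (e j)) ?I" if "i \<in> {0..m}" for i
    using that by blast
  have "\<exists>j\<in>?I. e j \<le> 3 ^ i \<and> 3 ^ i \<le> 2 * e j" if i: "i \<in> {0..m}" for i
  proof -
    obtain a where "sum a ?I \<le> 2" "(\<Sum>j\<in>?I. of_nat (a j) * e j) = of_nat (3 ^ i)"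
      using power_in_two_span_imp_exponent_sum[OF assms(1-4) finite_atLeastAtMost assms(6)
          all_in_span[OF i]] by blast
    from exists_term_bracketing_sum[OF finite_atLeastAtMost assms(6) this] show ?thesis by simp
  qed
  then have "m + 1 \<le> card ?I"
    using card_ge_if_powers_of_three_bracketed[OF finite_atLeastAtMost] by blast
  then show False using assms(5) by simp
qed

end
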